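(* Let $\tau$ be a smooth function on $S^1$ and let $\ell>0$. Let $\tau^\circ=\int_{S^1}\tau\,ds$, where $s$ is the unit coordinate on $S^1$. If $\tau^\circ\neq0$, let $\Psi=\ell\tau^\circ$. Then there is a smooth embedding $\iota:S^1\to\mathcal K_\Psi$ such that $\iota(S^1)$ is a spacelike curve whose induced metric $g$ and second fundamental form $K$ satisfy $\iota^*g=g_\ell$ and $\iota^*K=\tau\,g_\ell$. If $\tau^\circ=0$, then there exist $L>0$ and a smooth embedding $\iota:S^1\to\mathcal C_L$ such that $\iota(S^1)$ is a spacelike curve whose induced metric $g$ and second fundamental form $K$ satisfy $\iota^*g=g_\ell$ and $\iota^*K=\tau\,g_\ell$.
   Context: $S^1=\mathbb{R}/\mathbb{Z}$ with unit coordinate $s$ (so $\int_{S^1}ds=1$), and $g_\ell=\ell^2ds^2$. $\mathbb{R}^{1,1}$ is $\mathbb{R}^2$ with coordinates $(t,x)$, metric $-dt^2+dx^2$, time-oriented by $\partial_t$; $I_\pm=\{\pm t>|x|\}$. For $\Psi\neq0$, $B_\Psi$ is the linear boost with matrix $\begin{pmatrix}\cosh\Psi&\sinh\Psi\\ \sinh\Psi&\cosh\Psi\end{pmatrix}$; the Kasner surface $\mathcal K_\Psi$ is $I_+/\langle B_\Psi\rangle$ if $\Psi>0$ and $I_-/\langle B_\Psi\rangle$ if $\Psi<0$, with the inherited time-oriented Lorentzian metric. For $L>0$, the flat Lorentzian cylinder is $\mathcal C_L=\mathbb{R}^{1,1}/\langle(t,x)\mapsto(t,x+L)\rangle$. For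 a spacelike curve, the induced second fundamental form is $K(X,Y)=-\langle n,\nabla_XY\rangle$ with $n$ the future-pointing unit normal. *)

theory Defs
  imports "HOL-Analysis.Analysis"
begin

text \<open>Points of R^{1,1} are pairs (t,x).  Functions on S^1 = R/Z are 1-periodic functions on R;
  maps S^1 -> quotient are described by lifts R -> R^2 that are equivariant w.r.t. a deck transformation.\<close>

definition smooth :: "(real \<Rightarrow> 'a::real_normed_vector) \<Rightarrow> bool" where
  "smooth f \<longleftrightarrow> (\<exists>D :: nat \<Rightarrow> real \<Rightarrow> 'a. D 0 = f \<and>
      (\<forall>n x. (D n has_vector_derivative D (Suc n) x) (at x)))"

definition mink :: "real \<times> real \<Rightarrow> real \<times> real \<Rightarrow> real" where
  "mink v w = - fst v * fst w + snd v * snd w"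

definition Iplus :: "(real \<times> real) set" where
  "Iplus = {p. fst p > \<bar>snd p\<bar>}"

definition Iminus :: "(real \<times> real) set" where
  "Iminus = {p. - fst p > \<bar>snd p\<bar>}"

definition boost :: "real \<Rightarrow> real \<times> real \<Rightarrow> real \<times> real" where
  "boost \<Psi> p = (cosh \<Psi> * fst p + sinh \<Psi> * snd p, sinh \<Psi> * fst p + cosh \<Psi> * snd p)"

text \<open>B_Psi^k = boost (k * Psi).\<close>

definition fut_unit_normal :: "real \<times> real \<Rightarrow> real \<times> real" where
  "fut_unit_normal v = (THE n. mink n n = -1 \<and> mink n v = 0 \<and> fst n > 0)"

definition vel :: "(real \<Rightarrow> real \<times> real) \<Rightarrow> real \<Rightarrow> real \<times> real" where
  "vel \<gamma> s = vector_derivative \<gamma> (at s)"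

definition acc :: "(real \<Rightarrow> real \<times> real) \<Rightarrow> real \<Rightarrow> real \<times> real" where
  "acc \<gamma> s = vector_derivative (vel \<gamma>) (at s)"

text \<open>Smooth embedding S^1 -> K_Psi, given by a lift gamma : R -> I_(+/-) with
  gamma(s+1) = B_Psi^k gamma(s); injectivity on the quotient; immersion.\<close>
definition kasner_embedding :: "real \<Rightarrow> (real \<Rightarrow> real \<times> real) \<Rightarrow> bool" where
  "kasner_embedding \<Psi> \<gamma> \<longleftrightarrow> smooth \<gamma>
     \<and> (\<forall>s. \<gamma> s \<in> (if \<Psi> > 0 then Iplus else Iminus))
     \<and> (\<exists>k::int. \<forall>s. \<gamma> (s + 1) = boost (of_int k * \<Psi>) (\<gamma> s))
     \<and> (\<forall>s s'. (\<exists>m::int. \<gamma> s = boost (of_int m * \<Psi>) (\<gamma> s')) \<longrightarrow> s - s' \<in> \<int>)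
     \<and> (\<forall>s. vel \<gamma> s \<noteq> 0)"

text \<open>Smooth embedding S^1 -> C_L, given by a lift gamma : R -> R^2.\<close>
definition cylinder_embedding :: "real \<Rightarrow> (real \<Rightarrow> real \<times> real) \<Rightarrow> bool" where
  "cylinder_embedding L \<gamma> \<longleftrightarrow> smooth \<gamma>
     \<and> (\<exists>k::int. \<forall>s. \<gamma> (s + 1) = \<gamma> s + (0, of_int k * L))
     \<and> (\<forall>s s'. (\<exists>m::int. \<gamma> s = \<gamma> s' + (0, of_int m * L)) \<longrightarrow> s - s' \<in> \<int>)
     \<and> (\<forall>s. vel \<gamma> s \<noteq> 0)"

text \<open>Spacelike, iota^* g = l^2 ds^2, iota^* K = tau * l^2 ds^2 with K(X,Y) = -<n, nabla_X Y>.\<close>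
definition curve_data :: "real \<Rightarrow> (real \<Rightarrow> real) \<Rightarrow> (real \<Rightarrow> real \<times> real) \<Rightarrow> bool" where
  "curve_data l \<tau> \<gamma> \<longleftrightarrow> (\<forall>s. mink (vel \<gamma> s) (vel \<gamma> s) > 0
     \<and> mink (vel \<gamma> s) (vel \<gamma> s) = l^2
     \<and> - mink (fut_unit_normal (vel \<gamma> s)) (acc \<gamma> s) = \<tau> s * l^2)"

definition mean_S1 :: "(real \<Rightarrow> real) \<Rightarrow> real" where
  "mean_S1 \<tau> = integral {0..1} \<tau>"

end

theory Submission
  imports Defs
begin

(* Parametrize the curve by a hyperbolic angle: a spacelike curve with velocity
   l (sinh theta, cosh theta) has induced metric l^2 ds^2 and second fundamental form
   theta' l ds^2, so theta' = l tau is forced and theta increases by Psi = l tau0 over one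
   period.  In the null coordinates u = t + x, w = t - x the curve is u' = l exp theta,
   w' = - l exp (- theta), and the boost B_Psi acts by (u, w) |-> (exp Psi u, exp (- Psi) w).
   For Psi ~= 0 the integration constants can be chosen so that u (s + 1) = exp Psi u s and
   w (s + 1) = exp (- Psi) w s; monotonicity of u and w then puts the curve in I_+ or I_- and
   makes it embedded in the Kasner quotient.  For Psi = 0, theta is periodic, and adding a
   constant to theta (a boost) makes t periodic while x grows by a fixed L > 0 per period. *)

lemma smooth_coinduct:
  fixes S :: "(real \<Rightarrow> 'a::real_normed_vector) set"
  assumes closed: "\<And>f. f \<in> S \<Longrightarrow> \<exists>g\<in>S. \<forall>x. (f has_vector_derivative g x) (at x)"
    and "f \<in> S"
  shows "smooth f"
proof -
  obtain d where d: "\<And>f. f \<in> S \<Longrightarrow> d f \<in> S \<and> (\<forall>x. (f has_vector_derivative d f x) (at x))"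
    using closed by metis
  have "(d ^^ n) f \<in> S" for n
    by (induction n) (auto simp: \<open>f \<in> S\<close> d)
  then show ?thesis
    unfolding smooth_def by (intro exI[of _ "\<lambda>n. (d ^^ n) f"]) (auto simp: d)
qed

lemma smooth_imp_smooth_derivative:
  fixes f :: "real \<Rightarrow> 'a::real_normed_vector"
  assumes "smooth f"
  obtains f' where "\<And>x. (f has_vector_derivative f' x) (at x)" and "smooth f'"
proof -
  obtain D where "D 0 = f" "\<And>n x. (D n has_vector_derivative D (Suc n) x) (at x)"
    using assms unfolding smooth_def by blast
  then show ?thesis
    using that[of "D 1"] unfolding smooth_def by (auto intro!: exI[of _ "\<lambda>n. D (Suc n)"])
qed

lemma smooth_if_smooth_derivative:
  fixes f :: "real \<Rightarrow> 'a::real_normed_vector"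
  assumes "\<And>x. (f has_vector_derivative f' x) (at x)" and "smooth f'"
  shows "smooth f"
  using assms by (intro smooth_coinduct[of "insert f {g. smooth g}"])
    (auto elim: smooth_imp_smooth_derivative)

lemma smooth_const: "smooth (\<lambda>x. c)"
  unfolding smooth_def
  by (rule exI[of _ "\<lambda>n x. if n = 0 then c else 0"]) (auto intro: derivative_eq_intros)

lemma smooth_Pair:
  fixes f :: "real \<Rightarrow> 'a::real_normed_vector" and g :: "real \<Rightarrow> 'b::real_normed_vector"
  assumes "smooth f" "smooth g"
  shows "smooth (\<lambda>x. (f x, g x))"
proof -
  obtain D where D: "D 0 = f" "\<And>n x. (D n has_vector_derivative D (Suc n) x) (at x)"
    using assms(1) unfolding smooth_def by blast
  obtain E where E: "E 0 = g" "\<And>n x. (E n has_vector_derivative E (Suc n) x) (at x)"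
    using assms(2) unfolding smooth_def by blast
  show ?thesis unfolding smooth_def
    by (rule exI[of _ "\<lambda>n x. (D n x, E n x)"]) (auto simp: D E intro!: has_vector_derivative_Pair)
qed

(* Closed under differentiation by the Leibniz rule, hence smooth by coinduction. *)
inductive_set smooth_ring_closure :: "(real \<Rightarrow> real) set" where
  smooth: "smooth f \<Longrightarrow> f \<in> smooth_ring_closure"
| add: "f \<in> smooth_ring_closure \<Longrightarrow> g \<in> smooth_ring_closure \<Longrightarrow> (\<lambda>x. f x + g x) \<in> smooth_ring_closure"
| mult: "f \<in> smooth_ring_closure \<Longrightarrow> g \<in> smooth_ring_closure \<Longrightarrow> (\<lambda>x. f x * g x) \<in> smooth_ring_closure"

lemma smooth_ring_closure_derivative:
  assumes "f \<in> smooth_ring_closure"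
  shows "\<exists>g\<in>smooth_ring_closure. \<forall>x. (f has_real_derivative g x) (at x)"
  using assms
proof induction
  case (smooth f)
  then obtain f' where "\<And>x. (f has_vector_derivative f' x) (at x)" and "smooth f'"
    by (blast elim: smooth_imp_smooth_derivative)
  then show ?case
    by (auto intro: smooth_ring_closure.smooth simp: has_real_derivative_iff_has_vector_derivative)
next
  case (add f g)
  then obtain f' g' where "f' \<in> smooth_ring_closure" "g' \<in> smooth_ring_closure"
    and "\<forall>x. (f has_real_derivative f' x) (at x)" "\<forall>x. (g has_real_derivative g' x) (at x)"
    by blast
  then show ?case
    by (intro bexI[of _ "\<lambda>x. f' x + g' x"] allI DERIV_add smooth_ring_closure.add) auto
next
  case (mult f g)
  then obtain f' g' where "f' \<in> smooth_ring_closure" "g' \<in> smooth_ring_closure"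
    and f': "\<forall>x. (f has_real_derivative f' x) (at x)" and g': "\<forall>x. (g has_real_derivative g' x) (at x)"
    by blast
  then have "(\<lambda>x. f' x * g x + f x * g' x) \<in> smooth_ring_closure"
    using mult.hyps by (intro smooth_ring_closure.add smooth_ring_closure.mult)
  moreover have "((\<lambda>x. f x * g x) has_real_derivative f' x * g x + f x * g' x) (at x)" for x
    using f' g' by (auto intro!: derivative_eq_intros)
  ultimately show ?case
    by (intro bexI[of _ "\<lambda>x. f' x * g x + f x * g' x"] allI)
qed

lemma smooth_ring_closure_smooth: "f \<in> smooth_ring_closure \<Longrightarrow> smooth f"
  by (rule smooth_coinduct[of smooth_ring_closure])
    (simp_all add: smooth_ring_closure_derivative flip: has_real_derivative_iff_has_vector_derivative)

lemma smooth_add: "smooth f \<Longrightarrow> smooth g \<Longrightarrow> smooth (\<lambda>x. f x + g x :: real)"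
  by (rule smooth_ring_closure_smooth) (intro smooth_ring_closure.add smooth_ring_closure.smooth)

lemma smooth_mult: "smooth f \<Longrightarrow> smooth g \<Longrightarrow> smooth (\<lambda>x. f x * g x :: real)"
  by (rule smooth_ring_closure_smooth) (intro smooth_ring_closure.mult smooth_ring_closure.smooth)

lemma smooth_exp_comp:
  fixes \<theta> :: "real \<Rightarrow> real"
  assumes "\<And>x. (\<theta> has_real_derivative \<theta>' x) (at x)" and "smooth \<theta>'"
  shows "smooth (\<lambda>x. exp (\<theta> x))"
proof (rule smooth_coinduct[of "{\<lambda>x. f x * exp (\<theta> x) | f. smooth f}"])
  \<comment> \<open>every derivative of exp \<circ> \<theta> has the form f \<cdot> exp \<circ> \<theta> with f smooth\<close>
  fix h assume "h \<in> {\<lambda>x. f x * exp (\<theta> x) | f. smooth f}"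
  then obtain f where h: "h = (\<lambda>x. f x * exp (\<theta> x))" and f: "smooth f" by blast
  obtain f' where f': "\<And>x. (f has_real_derivative f' x) (at x)" and "smooth f'"
    using f unfolding has_real_derivative_iff_has_vector_derivative
    by (blast elim: smooth_imp_smooth_derivative)
  then have "smooth (\<lambda>x. f' x + f x * \<theta>' x)"
    using f assms(2) by (intro smooth_add smooth_mult)
  moreover have "(h has_real_derivative (f' x + f x * \<theta>' x) * exp (\<theta> x)) (at x)" for x
    unfolding h using f'[of x] assms(1)[of x]
    by (auto intro!: derivative_eq_intros simp: algebra_simps)
  ultimately show "\<exists>g\<in>{\<lambda>x. f x * exp (\<theta> x) | f. smooth f}. \<forall>x. (h has_vector_derivative g x) (at x)"
    by (auto simp: has_real_derivative_iff_has_vector_derivative)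
next
  show "(\<lambda>x. exp (\<theta> x)) \<in> {\<lambda>x. f x * exp (\<theta> x) | f. smooth f}"
    using smooth_const[of 1] by force
qed

lemma exists_antiderivative:
  fixes f :: "real \<Rightarrow> real"
  assumes "\<And>x. isCont f x"
  obtains F where "\<And>x. (F has_real_derivative f x) (at x)"
proof -
  from einterval_antiderivative[of "-\<infinity>" "\<infinity>" f] assms
  obtain F where "\<forall>x. (F has_vector_derivative f x) (at x)" by auto
  then show ?thesis
    using that by (auto simp: has_real_derivative_iff_has_vector_derivative)
qed

lemma antiderivative_shift_diff_const:
  fixes F f :: "real \<Rightarrow> real"
  assumes F: "\<And>x. (F has_real_derivative f x) (at x)" and f: "\<And>x. f (x + 1) = c * f x"
  shows "F (x + 1) - c * F x = F 1 - c * F 0"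
proof -
  have "((\<lambda>x. F (x + 1) - c * F x) has_real_derivative f (x + 1) - c * f x) (at x)" for x
    using F[of "x + 1"] F[of x] by (intro DERIV_diff DERIV_cmult) (auto simp: DERIV_shift)
  then have "((\<lambda>x. F (x + 1) - c * F x) has_real_derivative 0) (at x)" for x
    by (simp add: f)
  from DERIV_isconst_all[OF allI[OF this], of x 0] show ?thesis by simp
qed

lemma exists_twisted_periodic_antiderivative:
  fixes f :: "real \<Rightarrow> real"
  assumes "\<And>x. isCont f x" and f: "\<And>x. f (x + 1) = c * f x" and "c \<noteq> 1"
  obtains F where "\<And>x. (F has_real_derivative f x) (at x)" and "\<And>x. F (x + 1) = c * F x"
proof -
  obtain F0 where F0: "\<And>x. (F0 has_real_derivative f x) (at x)"
    using exists_antiderivative assms(1) by blast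
  define k where "k = (F0 1 - c * F0 0) / (c - 1)"
  define F where "F x = F0 x + k" for x
  have "(F has_real_derivative f x) (at x)" for x
    unfolding F_def using F0 by (auto intro!: derivative_eq_intros)
  moreover have "F (x + 1) = c * F x" for x
  proof -
    have "(c - 1) * k = F0 1 - c * F0 0"
      using \<open>c \<noteq> 1\<close> by (simp add: k_def)
    then show ?thesis
      unfolding F_def using antiderivative_shift_diff_const[of F0 f c x] F0 f
      by (simp add: algebra_simps)
  qed
  ultimately show ?thesis by (rule that)
qed

lemma strict_mono_of_pos_derivative:
  fixes F f :: "real \<Rightarrow> real"
  assumes "\<And>x. (F has_real_derivative f x) (at x)" and "\<And>x. f x > 0"
  shows "strict_mono F"
  using assms by (force intro: strict_monoI DERIV_pos_imp_increasing)

lemma shift_int_mult: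
  fixes u :: "real \<Rightarrow> real"
  assumes u: "\<And>x. u (x + 1) = exp a * u x"
  shows "u (x + of_int m) = exp (of_int m * a) * u x"
proof (induction m rule: int_induct[where k = 0])
  case (step1 i)
  have "u (x + of_int (i + 1)) = exp a * u (x + of_int i)"
    using u[of "x + of_int i"] by (simp add: add.assoc)
  then show ?case
    by (simp add: step1.IH distrib_right exp_add)
next
  case (step2 i)
  have "u (x + of_int i) = exp a * u (x + of_int (i - 1))"
    using u[of "x + of_int (i - 1)"] by (simp add: algebra_simps)
  then show ?case
    by (simp add: step2.IH left_diff_distrib exp_diff field_simps)
qed simp

lemma shift_int_add:
  fixes u :: "real \<Rightarrow> real"
  assumes u: "\<And>x. u (x + 1) = u x + L"
  shows "u (x + of_int m) = u x + of_int m * L"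
proof (induction m rule: int_induct[where k = 0])
  case (step1 i)
  then show ?case
    using u[of "x + of_int i"] by (simp add: algebra_simps)
next
  case (step2 i)
  then show ?case
    using u[of "x + of_int (i - 1)"] by (simp add: algebra_simps)
qed simp

lemma strict_mono_twisted_periodic_sign:
  fixes u :: "real \<Rightarrow> real"
  assumes "strict_mono u" and "u (x + 1) = c * u x"
  shows "(c - 1) * u x > 0"
  using strict_monoD[OF assms(1), of x "x + 1"] assms(2) by (simp add: algebra_simps)

definition null_point :: "real \<Rightarrow> real \<Rightarrow> real \<times> real" where
  "null_point u w = ((u + w) / 2, (u - w) / 2)"

lemma null_point_eq_iff: "null_point u w = null_point u' w' \<longleftrightarrow> u = u' \<and> w = w'"
  unfolding null_point_def by auto

lemma boost_null_point: "boost a (null_point u w) = null_point (exp a * u) (exp (- a) * w)"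
  unfolding boost_def null_point_def cosh_def sinh_def by (simp add: field_simps)

lemma null_point_translate: "null_point u w + (0, L) = null_point (u + L) (w - L)"
  unfolding null_point_def by (simp add: field_simps)

lemma null_point_in_Iplus_iff: "null_point u w \<in> Iplus \<longleftrightarrow> u > 0 \<and> w > 0"
  unfolding null_point_def Iplus_def by (auto simp: abs_less_iff field_simps)

lemma null_point_in_Iminus_iff: "null_point u w \<in> Iminus \<longleftrightarrow> u < 0 \<and> w < 0"
  unfolding null_point_def Iminus_def by (auto simp: abs_less_iff field_simps)

lemma null_point_in_light_cone:
  fixes u w :: "real \<Rightarrow> real"
  assumes "strict_mono u" and "strict_mono (\<lambda>s. - w s)"
    and "\<And>s. u (s + 1) = exp \<Psi> * u s" and "\<And>s. w (s + 1) = exp (- \<Psi>) * w s"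
    and "\<Psi> \<noteq> 0"
  shows "null_point (u s) (w s) \<in> (if \<Psi> > 0 then Iplus else Iminus)"
proof -
  have "(exp \<Psi> - 1) * u s > 0"
    using assms(1,3) by (rule strict_mono_twisted_periodic_sign)
  moreover have "(exp (- \<Psi>) - 1) * - w s > 0"
    using assms(2) by (rule strict_mono_twisted_periodic_sign) (simp add: assms(4))
  ultimately show ?thesis
    using \<open>\<Psi> \<noteq> 0\<close> by (auto simp: null_point_in_Iplus_iff null_point_in_Iminus_iff
        zero_less_mult_iff mult_less_0_iff)
qed

lemma fut_unit_normal_hyperbolic:
  assumes "l > 0"
  shows "fut_unit_normal (l * sinh a, l * cosh a) = (cosh a, sinh a)"
  unfolding fut_unit_normal_def
proof (rule the_equality)
  show "mink (cosh a, sinh a) (cosh a, sinh a) = - 1 \<and>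
      mink (cosh a, sinh a) (l * sinh a, l * cosh a) = 0 \<and> 0 < fst (cosh a, sinh a)"
    using cosh_square_eq[of a] by (simp add: mink_def power2_eq_square algebra_simps)
next
  fix n :: "real \<times> real"
  assume n: "mink n n = - 1 \<and> mink n (l * sinh a, l * cosh a) = 0 \<and> 0 < fst n"
  obtain p q where pq: "n = (p, q)" by (cases n)
  have unit: "q\<^sup>2 = p\<^sup>2 - 1" and orth: "q * cosh a = p * sinh a" and "p > 0"
    using n assms by (auto simp: pq mink_def power2_eq_square algebra_simps)
  have "p\<^sup>2 = (cosh a)\<^sup>2"
    using arg_cong[OF orth, of power2] unit cosh_square_eq[of a]
    by (simp add: algebra_simps)
  then have "p = cosh a"
    using \<open>p > 0\<close> by simp
  with orth show "n = (cosh a, sinh a)"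
    by (simp add: pq)
qed

lemma curve_data_of_angle:
  assumes "l > 0"
    and \<gamma>: "\<And>s. (\<gamma> has_vector_derivative (l * sinh (\<theta> s), l * cosh (\<theta> s))) (at s)"
    and \<theta>: "\<And>s. (\<theta> has_real_derivative l * \<tau> s) (at s)"
  shows "curve_data l \<tau> \<gamma>"
proof -
  have vel: "vel \<gamma> = (\<lambda>s. (l * sinh (\<theta> s), l * cosh (\<theta> s)))"
    unfolding vel_def using \<gamma> by (auto intro: vector_derivative_at)
  have "((\<lambda>s. l * sinh (\<theta> s)) has_real_derivative l * (l * \<tau> s) * cosh (\<theta> s)) (at s)"
    and "((\<lambda>s. l * cosh (\<theta> s)) has_real_derivative l * (l * \<tau> s) * sinh (\<theta> s)) (at s)" for s
    using \<theta>[of s] by (auto intro!: derivative_eq_intros)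
  then have "((\<lambda>s. (l * sinh (\<theta> s), l * cosh (\<theta> s))) has_vector_derivative
      (l * (l * \<tau> s) * cosh (\<theta> s), l * (l * \<tau> s) * sinh (\<theta> s))) (at s)" for s
    unfolding has_real_derivative_iff_has_vector_derivative by (rule has_vector_derivative_Pair)
  then have acc: "acc \<gamma> s = (l * (l * \<tau> s) * cosh (\<theta> s), l * (l * \<tau> s) * sinh (\<theta> s))" for s
    unfolding acc_def vel by (rule vector_derivative_at)
  have cosh_sinh: "(cosh (\<theta> s))\<^sup>2 - (sinh (\<theta> s))\<^sup>2 = 1" for s
    by (simp add: cosh_square_eq)
  show ?thesis
    unfolding curve_data_def vel acc fut_unit_normal_hyperbolic[OF \<open>l > 0\<close>] mink_def
    using cosh_sinh \<open>l > 0\<close> by (simp add: power2_eq_square algebra_simps)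
qed

lemma curve_from_null_coordinates:
  fixes u w \<theta> :: "real \<Rightarrow> real"
  assumes "l > 0" and "smooth \<tau>"
    and \<theta>: "\<And>s. (\<theta> has_real_derivative l * \<tau> s) (at s)"
    and u: "\<And>s. (u has_real_derivative l * exp (\<theta> s)) (at s)"
    and w: "\<And>s. (w has_real_derivative - l * exp (- \<theta> s)) (at s)"
  defines "\<gamma> \<equiv> \<lambda>s. null_point (u s) (w s)"
  shows "smooth \<gamma>" and "curve_data l \<tau> \<gamma>" and "\<And>s. vel \<gamma> s \<noteq> 0"
proof -
  have t': "((\<lambda>s. (u s + w s) / 2) has_real_derivative l / 2 * exp (\<theta> s) + - l / 2 * exp (- \<theta> s)) (at s)"
    and x': "((\<lambda>s. (u s - w s) / 2) has_real_derivative l / 2 * exp (\<theta> s) + l / 2 * exp (- \<theta> s)) (at s)"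
    for s using u[of s] w[of s] by (auto intro!: derivative_eq_intros simp: field_simps)
  have \<gamma>': "(\<gamma> has_vector_derivative (l * sinh (\<theta> s), l * cosh (\<theta> s))) (at s)" for s
    unfolding \<gamma>_def null_point_def
    using t'[of s] x'[of s] unfolding has_real_derivative_iff_has_vector_derivative
    by (intro has_vector_derivative_Pair) (simp_all add: sinh_def cosh_def field_simps)
  show "curve_data l \<tau> \<gamma>"
    using curve_data_of_angle[OF \<open>l > 0\<close> \<gamma>' \<theta>] .
  show "vel \<gamma> s \<noteq> 0" for s
    unfolding vel_def vector_derivative_at[OF \<gamma>'] using \<open>l > 0\<close> by (simp add: zero_prod_def)
  have c\<tau>: "smooth (\<lambda>s. c * \<tau> s)" for c
    using \<open>smooth \<tau>\<close> by (intro smooth_mult smooth_const)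
  have e: "smooth (\<lambda>s. exp (\<theta> s))"
    using \<theta> c\<tau> by (rule smooth_exp_comp)
  have "((\<lambda>s. - \<theta> s) has_real_derivative - l * \<tau> s) (at s)" for s
    using \<theta>[of s] by (auto intro!: derivative_eq_intros)
  then have e': "smooth (\<lambda>s. exp (- \<theta> s))"
    using c\<tau> by (rule smooth_exp_comp)
  have "smooth (\<lambda>s. (u s + w s) / 2)"
    using t' unfolding has_real_derivative_iff_has_vector_derivative
    by (rule smooth_if_smooth_derivative) (intro smooth_add smooth_mult smooth_const e e')
  moreover have "smooth (\<lambda>s. (u s - w s) / 2)"
    using x' unfolding has_real_derivative_iff_has_vector_derivative
    by (rule smooth_if_smooth_derivative) (intro smooth_add smooth_mult smooth_const e e')
  ultimately show "smooth \<gamma>"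
    unfolding \<gamma>_def null_point_def by (rule smooth_Pair)
qed

lemma exists_twisted_null_coordinates:
  fixes \<theta> :: "real \<Rightarrow> real"
  assumes \<theta>: "\<And>s. (\<theta> has_real_derivative \<theta>' s) (at s)"
    and \<theta>_shift: "\<And>s. \<theta> (s + 1) = \<theta> s + \<Psi>"
    and "\<Psi> \<noteq> 0"
  obtains u w where "\<And>s. (u has_real_derivative l * exp (\<theta> s)) (at s)"
    and "\<And>s. (w has_real_derivative - l * exp (- \<theta> s)) (at s)"
    and "\<And>s. u (s + 1) = exp \<Psi> * u s" and "\<And>s. w (s + 1) = exp (- \<Psi>) * w s"
proof -
  have "isCont \<theta> s" for s
    using \<theta> by (rule DERIV_isCont)
  then have cont: "isCont (\<lambda>s. l * exp (\<theta> s)) s" "isCont (\<lambda>s. - l * exp (- \<theta> s)) s" for s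
    by (auto intro!: continuous_intros)
  have shift: "l * exp (\<theta> (s + 1)) = exp \<Psi> * (l * exp (\<theta> s))"
    "- l * exp (- \<theta> (s + 1)) = exp (- \<Psi>) * (- l * exp (- \<theta> s))" for s
    by (simp_all add: \<theta>_shift exp_add [symmetric])
  have "exp \<Psi> \<noteq> 1" "exp (- \<Psi>) \<noteq> 1"
    using \<open>\<Psi> \<noteq> 0\<close> by simp_all
  obtain u where "\<And>s. (u has_real_derivative l * exp (\<theta> s)) (at s)" "\<And>s. u (s + 1) = exp \<Psi> * u s"
    using exists_twisted_periodic_antiderivative[of "\<lambda>s. l * exp (\<theta> s)", OF cont(1) shift(1)
        \<open>exp \<Psi> \<noteq> 1\<close>] by blast
  moreover obtain w
    where "\<And>s. (w has_real_derivative - l * exp (- \<theta> s)) (at s)" "\<And>s. w (s + 1) = exp (- \<Psi>) * w s"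
    using exists_twisted_periodic_antiderivative[of "\<lambda>s. - l * exp (- \<theta> s)", OF cont(2) shift(2)
        \<open>exp (- \<Psi>) \<noteq> 1\<close>] by blast
  ultimately show ?thesis
    using that by blast
qed

lemma kasner_embedding_with_curve_data:
  fixes \<theta> :: "real \<Rightarrow> real"
  assumes "l > 0" and "smooth \<tau>"
    and \<theta>: "\<And>s. (\<theta> has_real_derivative l * \<tau> s) (at s)"
    and \<theta>_shift: "\<And>s. \<theta> (s + 1) = \<theta> s + \<Psi>"
    and "\<Psi> \<noteq> 0"
  shows "\<exists>\<gamma>. kasner_embedding \<Psi> \<gamma> \<and> curve_data l \<tau> \<gamma>"
proof -
  obtain u w where u: "\<And>s. (u has_real_derivative l * exp (\<theta> s)) (at s)"
    and w: "\<And>s. (w has_real_derivative - l * exp (- \<theta> s)) (at s)"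
    and u_shift: "\<And>s. u (s + 1) = exp \<Psi> * u s" and w_shift: "\<And>s. w (s + 1) = exp (- \<Psi>) * w s"
    using exists_twisted_null_coordinates[OF \<theta> \<theta>_shift \<open>\<Psi> \<noteq> 0\<close>] by blast
  define \<gamma> where "\<gamma> s = null_point (u s) (w s)" for s
  have curve: "smooth \<gamma>" "curve_data l \<tau> \<gamma>" "\<And>s. vel \<gamma> s \<noteq> 0"
    using curve_from_null_coordinates[OF \<open>l > 0\<close> \<open>smooth \<tau>\<close> \<theta> u w] unfolding \<gamma>_def[abs_def] by blast+
  have u_mono: "strict_mono u"
    by (rule strict_mono_of_pos_derivative[OF u]) (simp add: \<open>l > 0\<close>)
  have "((\<lambda>s. - w s) has_real_derivative l * exp (- \<theta> s)) (at s)" for s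
    using DERIV_minus[OF w[of s]] by simp
  then have w_anti: "strict_mono (\<lambda>s. - w s)"
    by (rule strict_mono_of_pos_derivative) (simp add: \<open>l > 0\<close>)
  have "\<gamma> s \<in> (if \<Psi> > 0 then Iplus else Iminus)" for s
    unfolding \<gamma>_def by (rule null_point_in_light_cone[OF u_mono w_anti u_shift w_shift \<open>\<Psi> \<noteq> 0\<close>])
  moreover have "\<gamma> (s + 1) = boost (of_int 1 * \<Psi>) (\<gamma> s)" for s
    by (simp add: \<gamma>_def boost_null_point u_shift w_shift)
  moreover have "s - s' \<in> \<int>" if "\<gamma> s = boost (of_int m * \<Psi>) (\<gamma> s')" for s s' m
  proof -
    have "u s = exp (of_int m * \<Psi>) * u s'"
      using that by (simp add: \<gamma>_def boost_null_point null_point_eq_iff)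
    also have "\<dots> = u (s' + of_int m)"
      using shift_int_mult[of u \<Psi> s' m] u_shift by simp
    finally have "s = s' + of_int m"
      using strict_mono_eq[OF u_mono] by blast
    then show ?thesis by simp
  qed
  ultimately show ?thesis
    unfolding kasner_embedding_def
    using curve by blast
qed

lemma exists_periodic_null_coordinates:
  fixes \<theta>\<^sub>0 :: "real \<Rightarrow> real"
  assumes "l > 0"
    and \<theta>\<^sub>0: "\<And>s. (\<theta>\<^sub>0 has_real_derivative \<theta>' s) (at s)"
    and \<theta>\<^sub>0_periodic: "\<And>s. \<theta>\<^sub>0 (s + 1) = \<theta>\<^sub>0 s"
  obtains \<theta> u w L where "\<And>s. (\<theta> has_real_derivative \<theta>' s) (at s)"
    and "\<And>s. (u has_real_derivative l * exp (\<theta> s)) (at s)"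
    and "\<And>s. (w has_real_derivative - l * exp (- \<theta> s)) (at s)"
    and "\<And>s. u (s + 1) = u s + L" and "\<And>s. w (s + 1) = w s - L" and "L > 0"
proof -
  have "isCont \<theta>\<^sub>0 s" for s
    using \<theta>\<^sub>0 by (rule DERIV_isCont)
  then have "isCont (\<lambda>s. exp (\<theta>\<^sub>0 s)) s" "isCont (\<lambda>s. exp (- \<theta>\<^sub>0 s)) s" for s
    by (auto intro!: continuous_intros)
  then obtain E G where E: "\<And>s. (E has_real_derivative exp (\<theta>\<^sub>0 s)) (at s)"
    and G: "\<And>s. (G has_real_derivative exp (- \<theta>\<^sub>0 s)) (at s)"
    by (metis exists_antiderivative)
  define a where "a = E 1 - E 0"
  define b where "b = G 1 - G 0"
  have E_shift: "E (s + 1) = E s + a" and G_shift: "G (s + 1) = G s + b" for s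
    using antiderivative_shift_diff_const[of E "\<lambda>s. exp (\<theta>\<^sub>0 s)" 1 s]
      antiderivative_shift_diff_const[of G "\<lambda>s. exp (- \<theta>\<^sub>0 s)" 1 s]
    by (simp_all add: E G \<theta>\<^sub>0_periodic a_def b_def)
  have "a > 0" "b > 0"
    using strict_mono_of_pos_derivative[OF E] strict_mono_of_pos_derivative[OF G]
    by (simp_all add: a_def b_def strict_mono_less)
  \<comment> \<open>rescaling the null coordinates by c and 1/c is a boost; c balances the two periods\<close>
  define c where "c = sqrt (b / a)"
  have "c > 0" and c: "c * c * a = b"
    using \<open>a > 0\<close> \<open>b > 0\<close> by (simp_all add: c_def)
  show ?thesis
  proof (rule that[of "\<lambda>s. \<theta>\<^sub>0 s + ln c" "\<lambda>s. l * c * E s" "\<lambda>s. - (l / c) * G s" "l * c * a"])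
    show "((\<lambda>s. \<theta>\<^sub>0 s + ln c) has_real_derivative \<theta>' s) (at s)" for s
      using \<theta>\<^sub>0[of s] by (auto intro!: derivative_eq_intros)
    show "((\<lambda>s. l * c * E s) has_real_derivative l * exp (\<theta>\<^sub>0 s + ln c)) (at s)"
      and "((\<lambda>s. - (l / c) * G s) has_real_derivative - l * exp (- (\<theta>\<^sub>0 s + ln c))) (at s)" for s
      using E[of s] G[of s] \<open>c > 0\<close>
      by (auto intro!: derivative_eq_intros simp: exp_add exp_diff exp_minus field_simps)
    show "l * c * E (s + 1) = l * c * E s + l * c * a"
      and "- (l / c) * G (s + 1) = - (l / c) * G s - l * c * a" for s
      unfolding E_shift G_shift c[symmetric] using \<open>c > 0\<close> by (simp_all add: field_simps)
    show "l * c * a > 0"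
      using \<open>l > 0\<close> \<open>c > 0\<close> \<open>a > 0\<close> by simp
  qed
qed

lemma cylinder_embedding_with_curve_data:
  fixes \<theta>\<^sub>0 :: "real \<Rightarrow> real"
  assumes "l > 0" and "smooth \<tau>"
    and \<theta>\<^sub>0: "\<And>s. (\<theta>\<^sub>0 has_real_derivative l * \<tau> s) (at s)"
    and \<theta>\<^sub>0_periodic: "\<And>s. \<theta>\<^sub>0 (s + 1) = \<theta>\<^sub>0 s"
  shows "\<exists>L>0. \<exists>\<gamma>. cylinder_embedding L \<gamma> \<and> curve_data l \<tau> \<gamma>"
proof -
  obtain \<theta> u w L where \<theta>: "\<And>s. (\<theta> has_real_derivative l * \<tau> s) (at s)"
    and u: "\<And>s. (u has_real_derivative l * exp (\<theta> s)) (at s)"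
    and w: "\<And>s. (w has_real_derivative - l * exp (- \<theta> s)) (at s)"
    and u_shift: "\<And>s. u (s + 1) = u s + L" and w_shift: "\<And>s. w (s + 1) = w s - L" and "L > 0"
    using exists_periodic_null_coordinates[OF \<open>l > 0\<close> \<theta>\<^sub>0 \<theta>\<^sub>0_periodic] by blast
  define \<gamma> where "\<gamma> s = null_point (u s) (w s)" for s
  have curve: "smooth \<gamma>" "curve_data l \<tau> \<gamma>" "\<And>s. vel \<gamma> s \<noteq> 0"
    using curve_from_null_coordinates[OF \<open>l > 0\<close> \<open>smooth \<tau>\<close> \<theta> u w] unfolding \<gamma>_def[abs_def] by blast+
  have u_mono: "strict_mono u"
    by (rule strict_mono_of_pos_derivative[OF u]) (simp add: \<open>l > 0\<close>)
  have "\<gamma> (s + 1) = \<gamma> s + (0, of_int 1 * L)" for s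
    by (simp add: \<gamma>_def null_point_translate u_shift w_shift)
  moreover have "s - s' \<in> \<int>" if "\<gamma> s = \<gamma> s' + (0, of_int m * L)" for s s' m
  proof -
    have "u s = u s' + of_int m * L"
      using that by (simp add: \<gamma>_def null_point_translate null_point_eq_iff)
    also have "\<dots> = u (s' + of_int m)"
      using shift_int_add[of u L s' m] u_shift by simp
    finally have "s = s' + of_int m"
      using strict_mono_eq[OF u_mono] by blast
    then show ?thesis by simp
  qed
  ultimately show ?thesis
    unfolding cylinder_embedding_def
    using curve \<open>L > 0\<close> by blast
qed

lemma exists_angle_function:
  fixes \<tau> :: "real \<Rightarrow> real"
  assumes "smooth \<tau>" and \<tau>_periodic: "\<And>s. \<tau> (s + 1) = \<tau> s"
  obtains \<theta> where "\<And>s. (\<theta> has_real_derivative l * \<tau> s) (at s)"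
    and "\<And>s. \<theta> (s + 1) = \<theta> s + l * mean_S1 \<tau>"
proof -
  obtain \<tau>' where "\<And>s. (\<tau> has_real_derivative \<tau>' s) (at s)"
    using \<open>smooth \<tau>\<close> unfolding has_real_derivative_iff_has_vector_derivative
    by (blast elim: smooth_imp_smooth_derivative)
  then have "isCont \<tau> s" for s
    by (rule DERIV_isCont)
  then obtain F where F: "\<And>s. (F has_real_derivative \<tau> s) (at s)"
    using exists_antiderivative by blast
  have "(\<tau> has_integral (F 1 - F 0)) {0..1}"
    using F by (intro fundamental_theorem_of_calculus)
      (auto simp: has_real_derivative_iff_has_vector_derivative[symmetric] intro: has_field_derivative_at_within)
  then have "mean_S1 \<tau> = F 1 - F 0"
    unfolding mean_S1_def by (rule integral_unique)
  then have F_shift: "F (s + 1) = F s + mean_S1 \<tau>" for s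
    using antiderivative_shift_diff_const[of F \<tau> 1 s] F \<tau>_periodic by simp
  show ?thesis
  proof (rule that[of "\<lambda>s. l * F s"])
    show "((\<lambda>s. l * F s) has_real_derivative l * \<tau> s) (at s)" for s
      using F by (auto intro!: derivative_eq_intros)
    show "l * F (s + 1) = l * F s + l * mean_S1 \<tau>" for s
      by (simp add: F_shift distrib_left)
  qed
qed

theorem proposition5p1:
  fixes \<tau> :: "real \<Rightarrow> real" and l :: real
  assumes "smooth \<tau>" and "\<forall>s. \<tau> (s + 1) = \<tau> s" and "l > 0"
  shows "(mean_S1 \<tau> \<noteq> 0 \<longrightarrow>
            (\<exists>\<gamma>. kasner_embedding (l * mean_S1 \<tau>) \<gamma> \<and> curve_data l \<tau> \<gamma>))
       \<and> (mean_S1 \<tau> = 0 \<longrightarrow>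
            (\<exists>L>0. \<exists>\<gamma>. cylinder_embedding L \<gamma> \<and> curve_data l \<tau> \<gamma>))"
proof -
  obtain \<theta> where \<theta>: "\<And>s. (\<theta> has_real_derivative l * \<tau> s) (at s)"
    and \<theta>_shift: "\<And>s. \<theta> (s + 1) = \<theta> s + l * mean_S1 \<tau>"
    using exists_angle_function[OF \<open>smooth \<tau>\<close>] assms(2) by blast
  show ?thesis
  proof (intro conjI impI)
    assume "mean_S1 \<tau> \<noteq> 0"
    with \<open>l > 0\<close> show "\<exists>\<gamma>. kasner_embedding (l * mean_S1 \<tau>) \<gamma> \<and> curve_data l \<tau> \<gamma>"
      by (intro kasner_embedding_with_curve_data[where \<theta> = \<theta>, OF \<open>l > 0\<close> \<open>smooth \<tau>\<close> \<theta> \<theta>_shift]) simp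
  next
    assume "mean_S1 \<tau> = 0"
    with \<theta>_shift show "\<exists>L>0. \<exists>\<gamma>. cylinder_embedding L \<gamma> \<and> curve_data l \<tau> \<gamma>"
      by (intro cylinder_embedding_with_curve_data[where \<theta>\<^sub>0 = \<theta>, OF \<open>l > 0\<close> \<open>smooth \<tau>\<close> \<theta>]) simp
  qed
qed

end
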